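(* Let $A=A^T\in\mathbb{R}^{n\times n}$, let $s$ be an integer with $1\leq s<d(A)$, and let $v_0\in\mathbb{R}^n$ with $\|v_0\|=1$ and $d(A,v_0)\geq s+1$. Consider the iteration $\widetilde v_{k+1}=P_s(A;v_k)v_k$, $v_{k+1}=\widetilde v_{k+1}/\|\widetilde v_{k+1}\|$, $k=0,1,2,\dots$, and let $\tau:=\lim_{k\to\infty}\|\widetilde v_k\|$ (this limit exists and is positive). Then every limit vector $v_*$ of the subsequence $\{v_{2k}\}$ satisfies $$(Q(A)-\tau^2 I)v_*=0,\qquad\text{where } Q(z):=P_s(z;w_* )\,P_s(z;v_* ),\quad w_*:=\frac{P_s(A;v_* )v_*}{\tau},$$ and in particular $s<d(A,v_* )\leq 2s$.
   Context: $d(A)$ is the degree of the minimal polynomial of $A$; $d(A,v)$ is the grade of $v$ w.r.t. $A$ (degree of the monic polynomial $p$ of smallest degree with $p(A)v=0$); $\mathcal{K}_k(A,v)=\mathrm{span}\{v,Av,\dots,A^{k-1}v\}$; $\mathcal{M}_s$ is the set of real monic polynomials of degree $s$; $\|\cdot\|$ is the Euclidean norm. For $v$ with $d(A,v)\geq s$, $P_s(\cdot\,;v)\in\mathcal{M}_s$ denotes the unique monic polynomial of degree $s$ such that $P_s(A;v)v\perp\mathcal{K}_s(A,v)$. (Under the hypotheses all $\widetilde v_k$ are nonzero, the sequence $\|\widetilde v_k\|$ is nondecreasing and bounded, and every limit vector $v_*$ has $d(A,v_* )\geq s+1$, $\|P_s(A;v_* )v_*\|=\tau$ and $d(A,w_*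 )\geq s$, so $Q$ is well defined.) *)

theory Defs
  imports "HOL-Analysis.Analysis" "HOL-Computational_Algebra.Polynomial"
begin

primrec mat_pow :: "real^'n^'n \<Rightarrow> nat \<Rightarrow> real^'n^'n" where
  "mat_pow A 0 = mat 1"
| "mat_pow A (Suc i) = A ** mat_pow A i"

definition poly_mat_vec :: "real poly \<Rightarrow> real^'n^'n \<Rightarrow> real^'n \<Rightarrow> real^'n" where
  "poly_mat_vec p A v = (\<Sum>i\<le>degree p. coeff p i *\<^sub>R (mat_pow A i *v v))"

definition poly_mat :: "real poly \<Rightarrow> real^'n^'n \<Rightarrow> real^'n^'n" where
  "poly_mat p A = (\<Sum>i\<le>degree p. coeff p i *\<^sub>R mat_pow A i)"

definition monic :: "real poly \<Rightarrow> bool" where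
  "monic p \<longleftrightarrow> lead_coeff p = 1"

definition min_poly_deg :: "real^'n^'n \<Rightarrow> nat" where
  "min_poly_deg A = (LEAST k. \<exists>p. monic p \<and> degree p = k \<and> poly_mat p A = 0)"

definition grade :: "real^'n^'n \<Rightarrow> real^'n \<Rightarrow> nat" where
  "grade A v = (LEAST k. \<exists>p. monic p \<and> degree p = k \<and> poly_mat_vec p A v = 0)"

definition krylov :: "real^'n^'n \<Rightarrow> real^'n \<Rightarrow> nat \<Rightarrow> (real^'n) set" where
  "krylov A v k = span {mat_pow A i *v v | i. i < k}"

definition P_s :: "nat \<Rightarrow> real^'n^'n \<Rightarrow> real^'n \<Rightarrow> real poly" where
  "P_s s A v = (THE p. monic p \<and> degree p = s \<and>
      (\<forall>u\<in>krylov A v s. inner u (poly_mat_vec p A v) = 0))"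

primrec iter_v :: "real^'n^'n \<Rightarrow> nat \<Rightarrow> real^'n \<Rightarrow> nat \<Rightarrow> real^'n" where
  "iter_v A s v0 0 = v0"
| "iter_v A s v0 (Suc k) =
     (let w = poly_mat_vec (P_s s A (iter_v A s v0 k)) A (iter_v A s v0 k)
      in (1 / norm w) *\<^sub>R w)"

text \<open>iter_vt A s v0 k = \<open>\<tilde>v\<^sub>k\<^sub>+\<^sub>1\<close> = P_s(A;v_k) v_k.\<close>
definition iter_vt :: "real^'n^'n \<Rightarrow> nat \<Rightarrow> real^'n \<Rightarrow> nat \<Rightarrow> real^'n" where
  "iter_vt A s v0 k = poly_mat_vec (P_s s A (iter_v A s v0 k)) A (iter_v A s v0 k)"

end

theory Submission
  imports Defs
begin

(*
  For symmetric A, orthogonality of P_s(A;v)v to K_s(A,v) gives, for every monic q of degree s,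
  ||P_s(A;v)v||^2 = <q(A) P_s(A;v)v, v>.  With q = P_s(.;v_(k+1)) this reads
  ||v~_(k+1)|| = <v~_(k+2), v_k> <= ||v~_(k+2)||, so the norms increase to a limit tau > 0 (they are
  bounded by ||A^s|| by minimality), and <v_(k+2), v_k> -> 1, i.e. v_(k+2) - v_k -> 0.  The same
  identity shows that grade > s is preserved along the iteration.

  Monotonicity makes ||v~_1|| a uniform lower bound for ||q(A)v_k|| over monic q of degree s.  This
  bounds the coefficients of P_s(.;v_k), so along a subsequence they converge, and by uniqueness the
  limit polynomial is P_s(.;v_* ) (resp. P_s(.;w_* ) one step later).  Passing to the limit in
  P_s(A;v_(k+1)) v~_(k+1) = ||v~_(k+1)|| ||v~_(k+2)|| v_(k+2) yields Q(A)v_* = tau^2 v_*, and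
  Q - tau^2 is a monic annihilator of v_* of degree 2s.
*)

section \<open>Polynomials in a matrix acting on vectors\<close>

lemma poly_mat_vec_eq_sum:
  assumes "degree p \<le> N"
  shows "poly_mat_vec p A v = (\<Sum>i\<le>N. coeff p i *\<^sub>R (mat_pow A i *v v))"
  unfolding poly_mat_vec_def
  by (rule sum.mono_neutral_left) (use assms in \<open>auto simp: coeff_eq_0\<close>)

lemma poly_mat_vec_0 [simp]: "poly_mat_vec 0 A v = 0"
  by (simp add: poly_mat_vec_def)

lemma poly_mat_vec_pCons: "poly_mat_vec (pCons a p) A v = a *\<^sub>R v + A *v poly_mat_vec p A v"
proof -
  have "poly_mat_vec (pCons a p) A v =
      (\<Sum>i\<le>Suc (degree p). coeff (pCons a p) i *\<^sub>R (mat_pow A i *v v))"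
    by (rule poly_mat_vec_eq_sum) (simp add: degree_pCons_le)
  also have "\<dots> = a *\<^sub>R v + (\<Sum>i\<le>degree p. coeff p i *\<^sub>R (mat_pow A (Suc i) *v v))"
    by (subst sum.atMost_Suc_shift) simp
  also have "(\<Sum>i\<le>degree p. coeff p i *\<^sub>R (mat_pow A (Suc i) *v v)) = A *v poly_mat_vec p A v"
    by (simp add: poly_mat_vec_def matrix_vector_mul_assoc[symmetric] matrix_vector_mult_scaleR vec.sum)
  finally show ?thesis .
qed

lemma poly_mat_vec_add: "poly_mat_vec (p + q) A v = poly_mat_vec p A v + poly_mat_vec q A v"
proof (induction p arbitrary: q rule: pCons_induct)
  case (pCons a p)
  then show ?case
    by (cases q rule: pCons_cases) (simp add: poly_mat_vec_pCons matrix_vector_right_distrib algebra_simps)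
qed simp

lemma poly_mat_vec_smult: "poly_mat_vec (smult c p) A v = c *\<^sub>R poly_mat_vec p A v"
  by (induction p rule: pCons_induct)
    (simp_all add: poly_mat_vec_pCons matrix_vector_mult_scaleR scaleR_add_right)

lemma poly_mat_vec_diff: "poly_mat_vec (p - q) A v = poly_mat_vec p A v - poly_mat_vec q A v"
  using poly_mat_vec_add[of "p - q" q A v] by simp

lemma poly_mat_vec_mult: "poly_mat_vec (p * q) A v = poly_mat_vec p A (poly_mat_vec q A v)"
  by (induction p rule: pCons_induct)
    (simp_all add: mult_pCons_left poly_mat_vec_add poly_mat_vec_smult poly_mat_vec_pCons)

lemma poly_mat_vec_monom: "poly_mat_vec (monom c i) A v = c *\<^sub>R (mat_pow A i *v v)"
  by (induction i)
    (simp_all add: monom_0 monom_Suc poly_mat_vec_pCons matrix_vector_mul_assoc matrix_vector_mult_scaleR)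

lemma poly_mat_vec_scaleR: "poly_mat_vec p A (c *\<^sub>R x) = c *\<^sub>R poly_mat_vec p A x"
  by (induction p rule: pCons_induct)
    (simp_all add: poly_mat_vec_pCons matrix_vector_mult_scaleR algebra_simps)

lemma poly_mat_vec_zero_vector [simp]: "poly_mat_vec p A 0 = 0"
  using poly_mat_vec_scaleR[of p A 0 0] by simp

lemma poly_mat_vec_commute: "poly_mat_vec p A (A *v v) = A *v poly_mat_vec p A v"
  by (induction p rule: pCons_induct)
    (simp_all add: poly_mat_vec_pCons matrix_vector_right_distrib matrix_vector_mult_scaleR)

lemma inner_matrix_vector_mul_symmetric:
  fixes A :: "real^'n^'n"
  assumes "transpose A = A"
  shows "inner (A *v x) y = inner x (A *v y)"
  by (metis assms dot_lmul_matrix vector_transpose_matrix)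

lemma poly_mat_vec_self_adjoint:
  fixes A :: "real^'n^'n"
  assumes "transpose A = A"
  shows "inner (poly_mat_vec p A x) y = inner x (poly_mat_vec p A y)"
  by (induction p arbitrary: x y rule: pCons_induct)
    (simp_all add: poly_mat_vec_pCons inner_add_left inner_add_right
      inner_matrix_vector_mul_symmetric[OF assms] poly_mat_vec_commute[symmetric])

lemma poly_mat_vec_tendsto_coeffs:
  fixes A :: "real^'n^'n"
  assumes "\<And>k. degree (p k) \<le> N" "degree p0 \<le> N"
    and "\<And>i. (\<lambda>k. coeff (p k) i) \<longlonglongrightarrow> coeff p0 i" and "X \<longlonglongrightarrow> x"
  shows "(\<lambda>k. poly_mat_vec (p k) A (X k)) \<longlonglongrightarrow> poly_mat_vec p0 A x"
  unfolding poly_mat_vec_eq_sum[OF assms(1)] poly_mat_vec_eq_sum[OF assms(2)]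
  by (intro tendsto_sum tendsto_scaleR assms(3)
      bounded_linear.tendsto[OF matrix_vector_mul_bounded_linear assms(4)])

lemma poly_mat_vec_tendsto:
  fixes A :: "real^'n^'n"
  assumes "X \<longlonglongrightarrow> x"
  shows "(\<lambda>k. poly_mat_vec p A (X k)) \<longlonglongrightarrow> poly_mat_vec p A x"
  using poly_mat_vec_tendsto_coeffs[of "\<lambda>_. p" "degree p" p] assms by simp

lemma matrix_vector_mul_bound:
  fixes A :: "real^'n^'n"
  obtains K where "1 \<le> K" "\<And>x. norm (A *v x) \<le> K * norm x"
proof -
  obtain K where K: "\<And>x. norm (A *v x) \<le> norm x * K"
    using bounded_linear.bounded[OF matrix_vector_mul_bounded_linear[of A]] by blast
  have "norm (A *v x) \<le> max 1 K * norm x" for x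
    using K[of x] mult_left_mono[of K "max 1 K" "norm x"] by (simp add: mult.commute)
  then show ?thesis by (intro that[of "max 1 K"]) auto
qed

lemma mat_pow_bound:
  fixes A :: "real^'n^'n"
  assumes "\<And>x. norm (A *v x) \<le> K * norm x" and "0 \<le> K"
  shows "norm (mat_pow A i *v x) \<le> K ^ i * norm x"
proof (induction i)
  case (Suc i)
  have "norm (mat_pow A (Suc i) *v x) \<le> K * norm (mat_pow A i *v x)"
    using assms(1) by (simp add: matrix_vector_mul_assoc[symmetric])
  also have "\<dots> \<le> K * (K ^ i * norm x)"
    using Suc assms(2) by (rule mult_left_mono)
  finally show ?case by simp
qed simp

lemma poly_mat_vec_monom_bound:
  fixes A :: "real^'n^'n"
  assumes "\<And>x. norm (A *v x) \<le> K * norm x" and "0 \<le> K"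
  shows "norm (poly_mat_vec (monom c i) A x) \<le> \<bar>c\<bar> * K ^ i * norm x"
  using mult_left_mono[OF mat_pow_bound[OF assms, of i x], of "\<bar>c\<bar>"]
  by (simp add: poly_mat_vec_monom mult.assoc)

section \<open>Monic polynomials, Krylov spaces and the polynomial P_s\<close>

lemma monic_nonzero: "monic p \<Longrightarrow> p \<noteq> 0"
  by (auto simp: monic_def)

lemma monic_monom_one: "monic (monom 1 s)" "degree (monom (1::real) s) = s"
  by (simp_all add: monic_def degree_monom_eq)

lemma degree_diff_monic_less:
  assumes "monic p" "monic q" "degree p = s" "degree q = s" "1 \<le> s"
  shows "degree (p - q) < s"
proof -
  have "degree (p - q) \<le> s" using assms by (simp add: degree_diff_le)
  moreover have "coeff (p - q) s = 0" using assms by (simp add: monic_def)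
  ultimately show ?thesis
    using assms(5) by (metis le_neq_implies_less leading_coeff_0_iff degree_0 not_one_le_zero)
qed

lemma monic_monom_mult:
  fixes r :: "real poly"
  assumes "r \<noteq> 0" "degree r \<le> s"
  shows "monic (monom (1 / lead_coeff r) (s - degree r) * r)"
    and "degree (monom (1 / lead_coeff r) (s - degree r) * r) = s"
proof -
  have c: "1 / lead_coeff r \<noteq> 0" using assms(1) by simp
  show "monic (monom (1 / lead_coeff r) (s - degree r) * r)"
    using assms(1) by (simp add: monic_def lead_coeff_mult lead_coeff_monom degree_monom_eq[OF c])
  show "degree (monom (1 / lead_coeff r) (s - degree r) * r) = s"
    using assms degree_mult_eq[of "monom (1 / lead_coeff r) (s - degree r)" r] c
    by (simp add: degree_monom_eq[OF c])
qed

lemma monic_minus_const: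
  assumes "monic p" "0 < degree p"
  shows "monic (p - [:c:])" "degree (p - [:c:]) = degree p"
proof -
  show d: "degree (p - [:c:]) = degree p"
    unfolding diff_conv_add_uminus using assms(2) by (intro degree_add_eq_left) simp
  show "monic (p - [:c:])"
    using assms d by (simp add: monic_def coeff_pCons')
qed

lemma monic_mult: "monic p \<Longrightarrow> monic q \<Longrightarrow> monic (p * q)"
  by (simp add: monic_def lead_coeff_mult)

lemma monic_of_coeffs:
  "monic (monom 1 s + (\<Sum>i<s. monom (c i) i))" "degree (monom 1 s + (\<Sum>i<s. monom (c i) i)) = s"
    "coeff (monom 1 s + (\<Sum>i<s. monom (c i) i)) j = (if j = s then 1 else if j < s then c j else (0::real))"
proof -
  let ?p = "monom 1 s + (\<Sum>i<s. monom (c i) i)"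
  show cf: "coeff ?p j = (if j = s then 1 else if j < s then c j else 0)" for j
    by (auto simp: coeff_sum coeff_monom)
  have "degree ?p \<le> s" by (rule degree_le) (simp del: coeff_add add: cf)
  moreover have "s \<le> degree ?p" by (rule le_degree) (simp del: coeff_add add: cf)
  ultimately show d: "degree ?p = s" by simp
  show "monic ?p" by (simp del: coeff_add add: monic_def d cf)
qed

lemma krylov_orth_iff:
  "(\<forall>u\<in>krylov A v s. inner u w = 0) \<longleftrightarrow> (\<forall>i<s. inner (mat_pow A i *v v) w = 0)"
proof
  assume orth: "\<forall>i<s. inner (mat_pow A i *v v) w = 0"
  show "\<forall>u\<in>krylov A v s. inner u w = 0"
  proof
    fix u assume "u \<in> krylov A v s"
    then show "inner u w = 0"
      unfolding krylov_def
    proof (induction rule: span_induct)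
      case base
      show ?case by (auto simp: subspace_def inner_add_left)
    qed (use orth in auto)
  qed
qed (auto simp: krylov_def intro: span_base)

lemma poly_mat_vec_in_krylov:
  assumes "degree r < s"
  shows "poly_mat_vec r A v \<in> krylov A v s"
  unfolding poly_mat_vec_def krylov_def
  using assms by (intro span_sum span_scale span_base) auto

lemma krylov_obtain_poly:
  assumes "y \<in> krylov A v s" "1 \<le> s"
  obtains r where "degree r < s" "y = poly_mat_vec r A v"
proof -
  have "\<exists>r. degree r < s \<and> y = poly_mat_vec r A v"
    using assms(1) unfolding krylov_def
  proof (induction rule: span_induct)
    case base
    show ?case unfolding subspace_def
    proof (safe)
      show "\<exists>r. degree r < s \<and> 0 = poly_mat_vec r A v"
        using assms(2) by (intro exI[of _ 0]) simp
    next
      fix r1 r2 :: "real poly"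
      assume "degree r1 < s" "degree r2 < s"
      then show "\<exists>r. degree r < s \<and> poly_mat_vec r1 A v + poly_mat_vec r2 A v = poly_mat_vec r A v"
        by (intro exI[of _ "r1 + r2"]) (simp add: poly_mat_vec_add degree_add_less)
    next
      fix c :: real and r1 :: "real poly"
      assume "degree r1 < s"
      then show "\<exists>r. degree r < s \<and> c *\<^sub>R poly_mat_vec r1 A v = poly_mat_vec r A v"
        by (intro exI[of _ "smult c r1"]) (simp add: poly_mat_vec_smult le_less_trans[OF degree_smult_le])
    qed
  next
    case (step x)
    then obtain i where "i < s" "x = mat_pow A i *v v" by blast
    then show ?case
      by (intro exI[of _ "monom 1 i"]) (simp add: poly_mat_vec_monom degree_monom_eq)
  qed
  then show ?thesis using that by blast
qed

(* Stands for s < d(A,v) without presupposing that v has an annihilator at all, which the LEAST in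
   grade does. *)
definition no_monic_annihilator :: "real^'n^'n \<Rightarrow> nat \<Rightarrow> real^'n \<Rightarrow> bool" where
  "no_monic_annihilator A s v \<longleftrightarrow>
     (\<forall>q. monic q \<longrightarrow> degree q = s \<longrightarrow> poly_mat_vec q A v \<noteq> 0)"

lemma no_monic_annihilator_nonzero:
  assumes "no_monic_annihilator A s v" "r \<noteq> 0" "degree r \<le> s"
  shows "poly_mat_vec r A v \<noteq> 0"
proof
  assume "poly_mat_vec r A v = 0"
  then have "poly_mat_vec (monom (1 / lead_coeff r) (s - degree r) * r) A v = 0"
    by (simp add: poly_mat_vec_mult)
  with assms monic_monom_mult[OF assms(2,3)] show False
    unfolding no_monic_annihilator_def by blast
qed

lemma no_monic_annihilator_if_grade_gt:
  assumes "s < grade A v"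
  shows "no_monic_annihilator A s v"
  unfolding no_monic_annihilator_def
proof (intro allI impI notI)
  fix q assume "monic q" "degree q = s" "poly_mat_vec q A v = 0"
  then have "grade A v \<le> s" unfolding grade_def by (intro Least_le) blast
  with assms show False by simp
qed

lemma grade_le_degree:
  assumes "monic p" "poly_mat_vec p A v = 0"
  shows "grade A v \<le> degree p"
  unfolding grade_def using assms by (intro Least_le) blast

lemma grade_gt_if_no_monic_annihilator:
  assumes "no_monic_annihilator A s v" "monic p" "poly_mat_vec p A v = 0"
  shows "s < grade A v"
proof -
  obtain q where q: "monic q" "degree q = grade A v" "poly_mat_vec q A v = 0"
    using LeastI[of "\<lambda>k. \<exists>p. monic p \<and> degree p = k \<and> poly_mat_vec p A v = 0", OF exI[of _ p]]
      assms(2,3)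
    unfolding grade_def by blast
  show ?thesis
    using no_monic_annihilator_nonzero[OF assms(1) monic_nonzero[OF q(1)]] q by (metis not_less)
qed

lemma grade_bounds_if_poly_eigenvector:
  assumes "no_monic_annihilator A s u" "1 \<le> s" "monic Q" "degree Q = 2 * s"
    and "poly_mat_vec Q A u = c *\<^sub>R u"
  shows "s < grade A u" "grade A u \<le> 2 * s"
proof -
  have "monic (Q - [:c:])" "degree (Q - [:c:]) = 2 * s" "poly_mat_vec (Q - [:c:]) A u = 0"
    using monic_minus_const[OF assms(3)] assms(2,4,5) by (simp_all add: poly_mat_vec_diff poly_mat_vec_pCons)
  then show "s < grade A u" "grade A u \<le> 2 * s"
    using grade_gt_if_no_monic_annihilator[OF assms(1)] grade_le_degree by metis+
qed

definition is_P_s :: "nat \<Rightarrow> real^'n^'n \<Rightarrow> real^'n \<Rightarrow> real poly \<Rightarrow> bool" where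
  "is_P_s s A v p \<longleftrightarrow> monic p \<and> degree p = s \<and>
      (\<forall>u\<in>krylov A v s. inner u (poly_mat_vec p A v) = 0)"

lemma is_P_s_exists:
  fixes A :: "real^'n^'n"
  assumes "1 \<le> s"
  shows "\<exists>p. is_P_s s A v p"
proof -
  obtain y z where y: "y \<in> krylov A v s" and z: "\<And>w. w \<in> krylov A v s \<Longrightarrow> orthogonal z w"
    and yz: "mat_pow A s *v v = y + z"
    using orthogonal_subspace_decomp_exists unfolding krylov_def by blast
  obtain r where r: "degree r < s" "y = poly_mat_vec r A v"
    using krylov_obtain_poly[OF y assms] .
  define p where "p = monom 1 s - r"
  have "degree p = s"
    unfolding p_def diff_conv_add_uminus using r(1) by (subst degree_add_eq_left) (simp_all add: degree_monom_eq)
  moreover have "monic p"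
    using calculation r(1) by (simp add: p_def monic_def coeff_eq_0)
  moreover have "poly_mat_vec p A v = z"
    using yz r by (simp add: p_def poly_mat_vec_diff poly_mat_vec_monom)
  ultimately show ?thesis
    using z unfolding is_P_s_def by (auto simp: orthogonal_def inner_commute)
qed

lemma is_P_s_unique:
  assumes "no_monic_annihilator A s v" "1 \<le> s" "is_P_s s A v p" "is_P_s s A v q"
  shows "p = q"
proof (rule ccontr)
  assume "p \<noteq> q"
  have d: "degree (p - q) < s"
    using assms(2-4) degree_diff_monic_less unfolding is_P_s_def by blast
  have "inner (poly_mat_vec (p - q) A v) (poly_mat_vec p A v) = 0"
    "inner (poly_mat_vec (p - q) A v) (poly_mat_vec q A v) = 0"
    using assms(3,4) poly_mat_vec_in_krylov[OF d] unfolding is_P_s_def by blast+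
  then have "inner (poly_mat_vec (p - q) A v) (poly_mat_vec (p - q) A v) = 0"
    by (simp only: poly_mat_vec_diff[of p q] inner_diff_right)
  with no_monic_annihilator_nonzero[OF assms(1)] \<open>p \<noteq> q\<close> d show False by simp
qed

lemma is_P_s_P_s:
  assumes "no_monic_annihilator A s v" "1 \<le> s"
  shows "is_P_s s A v (P_s s A v)"
proof -
  have "\<exists>!p. is_P_s s A v p"
    using is_P_s_exists[OF assms(2)] is_P_s_unique[OF assms] by blast
  then show ?thesis
    unfolding P_s_def is_P_s_def[symmetric] by (rule theI')
qed

lemma P_s_eqI:
  assumes "no_monic_annihilator A s v" "1 \<le> s" "is_P_s s A v p"
  shows "P_s s A v = p"
  using is_P_s_unique[OF assms(1,2) is_P_s_P_s[OF assms(1,2)] assms(3)] .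

lemma is_P_s_inner_monic:
  assumes "is_P_s s A v p" "monic q" "degree q = s" "1 \<le> s"
  shows "inner (poly_mat_vec p A v) (poly_mat_vec q A v) = (norm (poly_mat_vec p A v))\<^sup>2"
proof -
  have "degree (q - p) < s"
    using assms degree_diff_monic_less unfolding is_P_s_def by blast
  then have "inner (poly_mat_vec (q - p) A v) (poly_mat_vec p A v) = 0"
    using assms(1) poly_mat_vec_in_krylov unfolding is_P_s_def by blast
  then have "inner (poly_mat_vec q A v) (poly_mat_vec p A v) = inner (poly_mat_vec p A v) (poly_mat_vec p A v)"
    by (simp add: poly_mat_vec_diff inner_diff_left)
  then show ?thesis
    by (metis inner_commute power2_norm_eq_inner)
qed

lemma is_P_s_norm_le:
  assumes "is_P_s s A v p" "monic q" "degree q = s" "1 \<le> s"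
  shows "norm (poly_mat_vec p A v) \<le> norm (poly_mat_vec q A v)"
proof -
  have "(norm (poly_mat_vec p A v))\<^sup>2 \<le> norm (poly_mat_vec p A v) * norm (poly_mat_vec q A v)"
    unfolding is_P_s_inner_monic[OF assms, symmetric] by (rule norm_cauchy_schwarz)
  then show ?thesis
    by (metis norm_ge_zero power2_eq_square mult_le_cancel_left le_less not_le mult_zero_left)
qed

lemma is_P_s_norm_sq_self_adjoint:
  fixes A :: "real^'n^'n"
  assumes "transpose A = A" "is_P_s s A v p" "monic q" "degree q = s" "1 \<le> s"
  shows "(norm (poly_mat_vec p A v))\<^sup>2 = inner (poly_mat_vec q A (poly_mat_vec p A v)) v"
  using is_P_s_inner_monic[OF assms(2-5)]
    poly_mat_vec_self_adjoint[OF assms(1), of q "poly_mat_vec p A v" v] by simp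

lemma no_monic_annihilator_P_s_image:
  fixes A :: "real^'n^'n"
  assumes "transpose A = A" "no_monic_annihilator A s v" "1 \<le> s" "c \<noteq> 0"
  shows "no_monic_annihilator A s (c *\<^sub>R poly_mat_vec (P_s s A v) A v)"
  unfolding no_monic_annihilator_def
proof (intro allI impI)
  fix q assume q: "monic q" "degree q = s"
  let ?p = "P_s s A v"
  have p: "is_P_s s A v ?p" using is_P_s_P_s[OF assms(2,3)] .
  have "poly_mat_vec ?p A v \<noteq> 0"
    using assms(2) p unfolding no_monic_annihilator_def is_P_s_def by blast
  then have "poly_mat_vec q A (poly_mat_vec ?p A v) \<noteq> 0"
    using is_P_s_norm_sq_self_adjoint[OF assms(1) p q assms(3)] by auto
  then show "poly_mat_vec q A (c *\<^sub>R poly_mat_vec ?p A v) \<noteq> 0"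
    using assms(4) by (simp add: poly_mat_vec_scaleR)
qed

section \<open>Limits of the polynomials P_s\<close>

lemma bounded_coords_convergent_subseq:
  fixes X :: "nat \<Rightarrow> nat \<Rightarrow> real"
  assumes "\<And>k i. i < m \<Longrightarrow> \<bar>X k i\<bar> \<le> B"
  obtains g L where "strict_mono g" "\<And>i. i < m \<Longrightarrow> (\<lambda>k. X (g k) i) \<longlonglongrightarrow> L i"
  using assms
proof (induction m arbitrary: thesis)
  case 0
  show ?case by (rule 0(1)[of id]) (simp_all add: strict_mono_def)
next
  case (Suc m)
  obtain g L where g: "strict_mono g" and L: "\<And>i. i < m \<Longrightarrow> (\<lambda>k. X (g k) i) \<longlonglongrightarrow> L i"
    using Suc.IH Suc.prems(2) by (metis less_SucI)
  have "bounded (range (\<lambda>k. X (g k) m))"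
    using Suc.prems(2) by (intro boundedI[of _ B]) auto
  then obtain l g' where g': "strict_mono g'" and l: "((\<lambda>k. X (g k) m) \<circ> g') \<longlonglongrightarrow> l"
    using bounded_imp_convergent_subsequence by blast
  show ?case
  proof (rule Suc.prems(1)[of "g \<circ> g'" "L(m := l)"])
    show "strict_mono (g \<circ> g')" using g g' by (rule strict_mono_o)
    fix i assume "i < Suc m"
    then show "(\<lambda>k. X ((g \<circ> g') k) i) \<longlonglongrightarrow> (L(m := l)) i"
      using l LIMSEQ_subseq_LIMSEQ[OF L g'] by (cases "i = m") (auto simp: o_def)
  qed
qed

lemma monic_polys_convergent_subseq:
  fixes p :: "nat \<Rightarrow> real poly"
  assumes "\<And>k. monic (p k)" "\<And>k. degree (p k) = s" "\<And>k i. \<bar>coeff (p k) i\<bar> \<le> B"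
  obtains g p0 where "strict_mono g" "monic p0" "degree p0 = s"
    "\<And>i. (\<lambda>k. coeff (p (g k)) i) \<longlonglongrightarrow> coeff p0 i"
proof -
  obtain g L where g: "strict_mono g" and L: "\<And>i. i < s \<Longrightarrow> (\<lambda>k. coeff (p (g k)) i) \<longlonglongrightarrow> L i"
    using bounded_coords_convergent_subseq[of s "\<lambda>k. coeff (p k)"] assms(3) by blast
  define p0 where "p0 = monom 1 s + (\<Sum>i<s. monom (L i) i)"
  have "(\<lambda>k. coeff (p (g k)) i) \<longlonglongrightarrow> coeff p0 i" for i
  proof -
    have "coeff (p k) i = (if i = s then 1 else 0)" if "s \<le> i" for k
      using that assms(1,2)[of k] by (auto simp: monic_def coeff_eq_0)
    then show ?thesis
      using L[of i] unfolding p0_def monic_of_coeffs(3) by (cases "i < s") auto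
  qed
  then show ?thesis
    using that g monic_of_coeffs(1,2) unfolding p0_def by blast
qed

context
  fixes A :: "real^'n^'n" and K \<delta> :: real and s :: nat and u :: "real^'n"
  assumes A_bound: "\<And>x. norm (A *v x) \<le> K * norm x" and K_ge: "1 \<le> K" and \<delta>_pos: "0 < \<delta>"
    and lower_bound: "\<And>q. monic q \<Longrightarrow> degree q = s \<Longrightarrow> \<delta> \<le> norm (poly_mat_vec q A u)"
begin

lemma coeff_bound_top:
  assumes "degree r \<le> d" "d < s"
  shows "\<bar>coeff r d\<bar> \<le> K ^ s / \<delta> * norm (poly_mat_vec r A u)"
proof (cases "coeff r d = 0")
  case False
  then have "degree r = d"
    using assms(1) le_degree by (metis antisym)
  then have r: "r \<noteq> 0" "degree r = d" "lead_coeff r = coeff r d"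
    using False by auto
  let ?m = "monom (1 / coeff r d) (s - d)"
  have "\<delta> \<le> norm (poly_mat_vec (?m * r) A u)"
    using lower_bound monic_monom_mult[of r s] r assms(2) by simp
  also have "\<dots> \<le> \<bar>1 / coeff r d\<bar> * K ^ (s - d) * norm (poly_mat_vec r A u)"
    unfolding poly_mat_vec_mult using K_ge by (intro poly_mat_vec_monom_bound A_bound) simp
  also have "\<dots> \<le> \<bar>1 / coeff r d\<bar> * K ^ s * norm (poly_mat_vec r A u)"
    using K_ge by (intro mult_right_mono mult_left_mono power_increasing) auto
  finally show ?thesis
    using False \<delta>_pos by (simp add: field_simps)
qed (use K_ge \<delta>_pos in \<open>auto intro!: divide_nonneg_pos mult_nonneg_nonneg\<close>)

lemma norm_drop_coeff_bound:
  assumes "norm u \<le> B" "degree r \<le> d" "d < s"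
  shows "norm (poly_mat_vec (r - monom (coeff r d) d) A u) \<le>
      (1 + K ^ s * (K ^ s / \<delta>) * B) * norm (poly_mat_vec r A u)"
proof -
  let ?N = "norm (poly_mat_vec r A u)" and ?c = "coeff r d" and ?L = "K ^ s / \<delta>"
  have "norm (poly_mat_vec (r - monom ?c d) A u) \<le> ?N + \<bar>?c\<bar> * K ^ d * norm u"
    unfolding poly_mat_vec_diff
    using norm_triangle_ineq4 poly_mat_vec_monom_bound[OF A_bound, of ?c d u] K_ge
    by (smt (verit))
  also have "\<dots> \<le> ?N + ?L * ?N * K ^ s * B"
  proof -
    have "0 \<le> ?L * ?N * K ^ s" using K_ge \<delta>_pos by (intro mult_nonneg_nonneg) auto
    then show ?thesis
      using coeff_bound_top[OF assms(2,3)] assms(1,3) K_ge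
      by (intro add_left_mono mult_mono power_increasing) auto
  qed
  finally show ?thesis
    by (simp add: algebra_simps)
qed

lemma coeff_bound:
  assumes "norm u \<le> B" "degree r \<le> d" "d < s"
  shows "\<bar>coeff r i\<bar> \<le>
      K ^ s / \<delta> * (1 + K ^ s * (K ^ s / \<delta>) * B) ^ d * norm (poly_mat_vec r A u)"
  using assms(2,3)
proof (induction d arbitrary: r i)
  case 0
  then show ?case
    using coeff_bound_top[of r 0] by (cases "i = 0") (simp_all add: coeff_eq_0)
next
  case (Suc d)
  let ?N = "norm (poly_mat_vec r A u)" and ?c = "coeff r (Suc d)"
  let ?L = "K ^ s / \<delta>" and ?M = "1 + K ^ s * (K ^ s / \<delta>) * B"
  have L: "0 \<le> ?L" using K_ge \<delta>_pos by simp
  have "0 \<le> K ^ s * ?L * B"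
    using L K_ge order_trans[OF norm_ge_zero assms(1)] by (intro mult_nonneg_nonneg) auto
  then have M: "1 \<le> ?M" by linarith
  define r' where "r' = r - monom ?c (Suc d)"
  have "degree r' \<le> d"
    using Suc.prems(1) by (intro degree_le) (auto simp: r'_def coeff_eq_0)
  have r': "norm (poly_mat_vec r' A u) \<le> ?M * ?N"
    unfolding r'_def using norm_drop_coeff_bound[OF assms(1) Suc.prems] .
  show ?case
  proof (cases "i = Suc d")
    case True
    have "?N \<le> ?M ^ Suc d * ?N"
      using mult_right_mono[OF one_le_power[OF M] norm_ge_zero] by (simp del: power_Suc)
    then have "?L * ?N \<le> ?L * (?M ^ Suc d * ?N)"
      using L by (rule mult_left_mono)
    with True coeff_bound_top[OF Suc.prems] show ?thesis by (simp only: mult.assoc)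
  next
    case False
    then have "\<bar>coeff r i\<bar> = \<bar>coeff r' i\<bar>" by (simp add: r'_def coeff_monom)
    also have "\<dots> \<le> ?L * ?M ^ d * norm (poly_mat_vec r' A u)"
      using Suc.IH \<open>degree r' \<le> d\<close> Suc.prems(2) by simp
    also have "\<dots> \<le> ?L * ?M ^ d * (?M * ?N)"
      using r' by (rule mult_left_mono) (intro mult_nonneg_nonneg L zero_le_power, use M in linarith)
    finally show ?thesis by (simp add: algebra_simps)
  qed
qed

lemma P_s_coeff_bound:
  assumes "1 \<le> s" "norm u \<le> B"
  shows "\<bar>coeff (P_s s A u) i\<bar> \<le>
      1 + K ^ s / \<delta> * (1 + K ^ s * (K ^ s / \<delta>) * B) ^ (s - 1) * (2 * K ^ s * B)"
    (is "_ \<le> 1 + ?C * _")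
proof -
  let ?p = "P_s s A u" and ?X = "monom 1 s :: real poly"
  have "no_monic_annihilator A s u"
    unfolding no_monic_annihilator_def using lower_bound \<delta>_pos by fastforce
  then have p: "is_P_s s A u ?p" using assms(1) by (rule is_P_s_P_s)
  have "norm (poly_mat_vec ?X A u) \<le> K ^ s * norm u"
    using poly_mat_vec_monom_bound[OF A_bound, of 1 s u] K_ge by simp
  also have "\<dots> \<le> K ^ s * B"
    using assms(2) K_ge by (intro mult_left_mono) auto
  finally have X: "norm (poly_mat_vec ?X A u) \<le> K ^ s * B" .
  have "norm (poly_mat_vec (?p - ?X) A u) \<le> norm (poly_mat_vec ?p A u) + norm (poly_mat_vec ?X A u)"
    unfolding poly_mat_vec_diff by (rule norm_triangle_ineq4)
  also have "\<dots> \<le> 2 * K ^ s * B"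
    using is_P_s_norm_le[OF p monic_monom_one assms(1)] X by simp
  finally have r: "norm (poly_mat_vec (?p - ?X) A u) \<le> 2 * K ^ s * B" .
  have B: "0 \<le> B" using assms(2) norm_ge_zero order_trans by blast
  have L: "0 \<le> K ^ s / \<delta>" using K_ge \<delta>_pos by simp
  have C: "0 \<le> ?C"
    using L B K_ge by (intro mult_nonneg_nonneg zero_le_power add_nonneg_nonneg) auto
  show ?thesis
  proof (cases "i < s")
    case True
    have "degree (?p - ?X) < s"
      using p monic_monom_one assms(1) degree_diff_monic_less unfolding is_P_s_def by blast
    then have "\<bar>coeff (?p - ?X) i\<bar> \<le> ?C * norm (poly_mat_vec (?p - ?X) A u)"
      using assms coeff_bound[of B "?p - ?X" "s - 1" i] by simp
    also have "\<dots> \<le> ?C * (2 * K ^ s * B)"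
      by (rule mult_left_mono[OF r C])
    finally show ?thesis using True by (simp add: coeff_monom)
  next
    case False
    then have "\<bar>coeff ?p i\<bar> \<le> 1"
      using p unfolding is_P_s_def monic_def by (cases "i = s") (auto simp: coeff_eq_0)
    moreover have "0 \<le> ?C * (2 * K ^ s * B)"
      by (intro mult_nonneg_nonneg C) (use K_ge B in auto)
    ultimately show ?thesis by linarith
  qed
qed

end

lemma no_monic_annihilator_limit:
  fixes A :: "real^'n^'n"
  assumes "V \<longlonglongrightarrow> u" "0 < \<delta>"
    and "\<And>k q. monic q \<Longrightarrow> degree q = s \<Longrightarrow> \<delta> \<le> norm (poly_mat_vec q A (V k))"
  shows "no_monic_annihilator A s u"
  unfolding no_monic_annihilator_def
proof (intro allI impI)
  fix q :: "real poly" assume q: "monic q" "degree q = s"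
  have "\<delta> \<le> norm (poly_mat_vec q A u)"
    by (rule LIMSEQ_le_const[OF tendsto_norm[OF poly_mat_vec_tendsto[OF assms(1), where p = q]]])
      (use assms(3)[OF q] in blast)
  with assms(2) show "poly_mat_vec q A u \<noteq> 0" by auto
qed

lemma is_P_s_limit:
  fixes A :: "real^'n^'n"
  assumes V: "V \<longlonglongrightarrow> u" and P: "\<And>k. is_P_s s A (V k) (P k)"
    and p: "monic p" "degree p = s" and coeffs: "\<And>i. (\<lambda>k. coeff (P k) i) \<longlonglongrightarrow> coeff p i"
  shows "is_P_s s A u p" and "(\<lambda>k. poly_mat_vec (P k) A (V k)) \<longlonglongrightarrow> poly_mat_vec p A u"
proof -
  show T: "(\<lambda>k. poly_mat_vec (P k) A (V k)) \<longlonglongrightarrow> poly_mat_vec p A u"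
    using P p(2) unfolding is_P_s_def by (intro poly_mat_vec_tendsto_coeffs coeffs V) auto
  have "inner (mat_pow A i *v u) (poly_mat_vec p A u) = 0" if "i < s" for i
  proof (rule LIMSEQ_unique)
    show "(\<lambda>k. inner (mat_pow A i *v V k) (poly_mat_vec (P k) A (V k))) \<longlonglongrightarrow>
        inner (mat_pow A i *v u) (poly_mat_vec p A u)"
      by (intro tendsto_inner T bounded_linear.tendsto[OF matrix_vector_mul_bounded_linear] V)
    show "(\<lambda>k. inner (mat_pow A i *v V k) (poly_mat_vec (P k) A (V k))) \<longlonglongrightarrow> 0"
      using P that unfolding is_P_s_def krylov_orth_iff by simp
  qed
  then show "is_P_s s A u p"
    using p unfolding is_P_s_def krylov_orth_iff by simp
qed

lemma P_s_subseq_tendsto: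
  fixes A :: "real^'n^'n"
  assumes s: "1 \<le> s" and \<delta>: "0 < \<delta>" and V: "V \<longlonglongrightarrow> u"
    and lower_bound: "\<And>k q. monic q \<Longrightarrow> degree q = s \<Longrightarrow> \<delta> \<le> norm (poly_mat_vec q A (V k))"
  obtains g where "strict_mono g"
    "(\<lambda>k. poly_mat_vec (P_s s A (V (g k))) A (V (g k))) \<longlonglongrightarrow> poly_mat_vec (P_s s A u) A u"
proof -
  obtain K where K: "1 \<le> K" "\<And>x. norm (A *v x) \<le> K * norm x"
    using matrix_vector_mul_bound by blast
  obtain B where B: "\<And>k. norm (V k) \<le> B"
    using convergent_imp_Bseq[OF convergentI[OF V]] by (meson BseqE)
  have P: "is_P_s s A (V k) (P_s s A (V k))" for k
  proof (rule is_P_s_P_s[OF _ s])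
    show "no_monic_annihilator A s (V k)"
      unfolding no_monic_annihilator_def using lower_bound[of _ k] \<delta> by force
  qed
  obtain g p where g: "strict_mono g" and p: "monic p" "degree p = s"
    and coeffs: "\<And>i. (\<lambda>k. coeff (P_s s A (V (g k))) i) \<longlonglongrightarrow> coeff p i"
    using monic_polys_convergent_subseq[of "\<lambda>k. P_s s A (V k)" s] P
      P_s_coeff_bound[OF K(2) K(1) \<delta> lower_bound s B] unfolding is_P_s_def by blast
  have Vg: "(\<lambda>k. V (g k)) \<longlonglongrightarrow> u"
    using LIMSEQ_subseq_LIMSEQ[OF V g] by (simp add: o_def)
  have "P_s s A u = p"
    using no_monic_annihilator_limit[OF V \<delta> lower_bound] s is_P_s_limit(1)[OF Vg P p coeffs]
    by (rule P_s_eqI)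
  then show ?thesis
    using that g is_P_s_limit(2)[OF Vg P p coeffs] by blast
qed

section \<open>The iteration\<close>

lemma norm_diff_sq_unit:
  fixes a b :: "'a::real_inner"
  assumes "norm a = 1" "norm b = 1"
  shows "(norm (a - b))\<^sup>2 = 2 - 2 * inner a b"
proof -
  have "inner a a = 1" "inner b b = 1"
    using assms by (metis power2_norm_eq_inner power_one)+
  then show ?thesis
    by (simp add: power2_norm_eq_inner inner_diff_left inner_diff_right inner_commute)
qed

lemma iter_v_Suc_eq: "iter_v A s v0 (Suc k) = (1 / norm (iter_vt A s v0 k)) *\<^sub>R iter_vt A s v0 k"
  by (simp add: iter_vt_def Let_def)

declare iter_v.simps(2) [simp del]

context
  fixes A :: "real^'n^'n" and s :: nat and v0 :: "real^'n"
  assumes symm: "transpose A = A" and s_ge: "1 \<le> s" and v0_norm: "norm v0 = 1"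
    and v0_no_annihilator: "no_monic_annihilator A s v0"
begin

lemma iter_v_invariant: "norm (iter_v A s v0 k) = 1 \<and> no_monic_annihilator A s (iter_v A s v0 k)"
proof (induction k)
  case (Suc k)
  then have "iter_vt A s v0 k \<noteq> 0"
    using is_P_s_P_s[OF _ s_ge] unfolding iter_vt_def no_monic_annihilator_def is_P_s_def by blast
  then show ?case
    using no_monic_annihilator_P_s_image[OF symm conjunct2[OF Suc] s_ge]
    by (simp add: iter_v_Suc_eq iter_vt_def)
qed (simp add: v0_norm v0_no_annihilator)

lemma norm_iter_v: "norm (iter_v A s v0 k) = 1"
  using iter_v_invariant by blast

lemma is_P_s_iter_v: "is_P_s s A (iter_v A s v0 k) (P_s s A (iter_v A s v0 k))"
  using iter_v_invariant s_ge is_P_s_P_s by blast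

lemma iter_vt_nonzero: "iter_vt A s v0 k \<noteq> 0"
  using iter_v_invariant is_P_s_iter_v unfolding iter_vt_def no_monic_annihilator_def is_P_s_def by blast

lemma iter_vt_eq: "iter_vt A s v0 k = norm (iter_vt A s v0 k) *\<^sub>R iter_v A s v0 (Suc k)"
  using iter_vt_nonzero by (simp add: iter_v_Suc_eq)

lemma norm_iter_vt_le:
  "monic q \<Longrightarrow> degree q = s \<Longrightarrow> norm (iter_vt A s v0 k) \<le> norm (poly_mat_vec q A (iter_v A s v0 k))"
  unfolding iter_vt_def using is_P_s_norm_le[OF is_P_s_iter_v _ _ s_ge] by blast

lemma norm_iter_vt_eq_inner: "norm (iter_vt A s v0 k) = inner (iter_vt A s v0 (Suc k)) (iter_v A s v0 k)"
proof -
  let ?q = "P_s s A (iter_v A s v0 (Suc k))"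
  have q: "monic ?q" "degree ?q = s" using is_P_s_iter_v unfolding is_P_s_def by auto
  have "(norm (iter_vt A s v0 k))\<^sup>2 = inner (poly_mat_vec ?q A (iter_vt A s v0 k)) (iter_v A s v0 k)"
    using is_P_s_norm_sq_self_adjoint[OF symm is_P_s_iter_v q s_ge] by (simp add: iter_vt_def)
  also have "\<dots> = norm (iter_vt A s v0 k) * inner (iter_vt A s v0 (Suc k)) (iter_v A s v0 k)"
    by (subst iter_vt_eq) (simp add: poly_mat_vec_scaleR iter_vt_def)
  finally show ?thesis
    using iter_vt_nonzero[of k] by (simp add: power2_eq_square)
qed

lemma incseq_norm_iter_vt: "incseq (\<lambda>k. norm (iter_vt A s v0 k))"
proof (rule incseq_SucI)
  fix k
  show "norm (iter_vt A s v0 k) \<le> norm (iter_vt A s v0 (Suc k))"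
    using norm_cauchy_schwarz[of "iter_vt A s v0 (Suc k)" "iter_v A s v0 k"]
    by (simp add: norm_iter_vt_eq_inner[of k] norm_iter_v)
qed

lemma norm_iter_vt_tendsto:
  "(\<lambda>k. norm (iter_vt A s v0 k)) \<longlonglongrightarrow> lim (\<lambda>k. norm (iter_vt A s v0 k))"
proof -
  obtain K where K: "1 \<le> K" "\<And>x. norm (A *v x) \<le> K * norm x"
    using matrix_vector_mul_bound by blast
  have "norm (iter_vt A s v0 k) \<le> K ^ s" for k
    using norm_iter_vt_le[OF monic_monom_one, of k] poly_mat_vec_monom_bound[OF K(2), of 1 s "iter_v A s v0 k"] K(1)
    by (simp add: norm_iter_v)
  then have "Bseq (\<lambda>k. norm (iter_vt A s v0 k))" by (intro BseqI'[of _ "K ^ s"]) simp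
  then show ?thesis
    using incseq_norm_iter_vt Bseq_mono_convergent convergent_LIMSEQ_iff by (metis incseq_def)
qed

lemma norm_iter_vt_le_lim: "norm (iter_vt A s v0 k) \<le> lim (\<lambda>k. norm (iter_vt A s v0 k))"
  using incseq_le[OF incseq_norm_iter_vt norm_iter_vt_tendsto] by blast

lemma lim_norm_iter_vt_pos: "0 < lim (\<lambda>k. norm (iter_vt A s v0 k))"
  using iter_vt_nonzero[of 0] norm_iter_vt_le_lim[of 0] by (metis less_le_trans zero_less_norm_iff)

lemma iter_v_Suc_Suc_diff_tendsto: "(\<lambda>k. iter_v A s v0 (Suc (Suc k)) - iter_v A s v0 k) \<longlonglongrightarrow> 0"
proof -
  let ?t = "\<lambda>k. norm (iter_vt A s v0 k)" and ?\<tau> = "lim (\<lambda>k. norm (iter_vt A s v0 k))"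
  have inner_eq: "inner (iter_v A s v0 (Suc (Suc k))) (iter_v A s v0 k) = ?t k / ?t (Suc k)" for k
  proof -
    have "?t k = ?t (Suc k) * inner (iter_v A s v0 (Suc (Suc k))) (iter_v A s v0 k)"
      unfolding norm_iter_vt_eq_inner[of k] by (subst iter_vt_eq) simp
    then show ?thesis using iter_vt_nonzero[of "Suc k"] by (simp add: field_simps)
  qed
  have "(\<lambda>k. ?t k / ?t (Suc k)) \<longlonglongrightarrow> ?\<tau> / ?\<tau>"
    using norm_iter_vt_tendsto LIMSEQ_Suc[OF norm_iter_vt_tendsto] lim_norm_iter_vt_pos
    by (intro tendsto_divide) auto
  then have "(\<lambda>k. inner (iter_v A s v0 (Suc (Suc k))) (iter_v A s v0 k)) \<longlonglongrightarrow> 1"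
    using lim_norm_iter_vt_pos by (simp add: inner_eq)
  then have "(\<lambda>k. (norm (iter_v A s v0 (Suc (Suc k)) - iter_v A s v0 k))\<^sup>2) \<longlonglongrightarrow> 2 - 2 * 1"
    unfolding norm_diff_sq_unit[OF norm_iter_v norm_iter_v] by (intro tendsto_intros)
  then have "(\<lambda>k. sqrt ((norm (iter_v A s v0 (Suc (Suc k)) - iter_v A s v0 k))\<^sup>2)) \<longlonglongrightarrow> sqrt 0"
    by (intro tendsto_real_sqrt) simp
  then have "(\<lambda>k. norm (iter_v A s v0 (Suc (Suc k)) - iter_v A s v0 k)) \<longlonglongrightarrow> 0"
    by simp
  then show ?thesis by (simp add: tendsto_norm_zero_iff)
qed

lemma norm_iter_vt_0_le:
  "monic q \<Longrightarrow> degree q = s \<Longrightarrow> norm (iter_vt A s v0 0) \<le> norm (poly_mat_vec q A (iter_v A s v0 k))"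
  using incseqD[OF incseq_norm_iter_vt, of 0 k] norm_iter_vt_le[of q k] by simp

lemma iter_vt_subseq_tendsto:
  assumes "(\<lambda>k. iter_v A s v0 (f k)) \<longlonglongrightarrow> u"
  obtains g where "strict_mono g"
    "(\<lambda>k. iter_vt A s v0 (f (g k))) \<longlonglongrightarrow> poly_mat_vec (P_s s A u) A u"
proof -
  have "0 < norm (iter_vt A s v0 0)" using iter_vt_nonzero by simp
  from P_s_subseq_tendsto[OF s_ge this assms norm_iter_vt_0_le] that show ?thesis
    unfolding iter_vt_def by blast
qed

lemma no_monic_annihilator_limit_iter_v:
  assumes "(\<lambda>k. iter_v A s v0 (f k)) \<longlonglongrightarrow> u"
  shows "no_monic_annihilator A s u"
proof -
  have "0 < norm (iter_vt A s v0 0)" using iter_vt_nonzero by simp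
  from no_monic_annihilator_limit[OF assms this norm_iter_vt_0_le] show ?thesis .
qed

lemma iter_v_limit_eigenvector:
  assumes h: "strict_mono h" and lim: "(\<lambda>k. iter_v A s v0 (h k)) \<longlonglongrightarrow> u"
    and \<tau>_def: "\<tau> = lim (\<lambda>k. norm (iter_vt A s v0 k))"
    and w_def: "w = (1 / \<tau>) *\<^sub>R poly_mat_vec (P_s s A u) A u"
  shows "poly_mat_vec (P_s s A w * P_s s A u) A u = \<tau>\<^sup>2 *\<^sub>R u"
proof -
  let ?v = "iter_v A s v0" and ?vt = "iter_vt A s v0"
  have t: "(\<lambda>k. norm (?vt k)) \<longlonglongrightarrow> \<tau>" and \<tau>: "0 < \<tau>"
    unfolding \<tau>_def using norm_iter_vt_tendsto lim_norm_iter_vt_pos .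
  have t_subseq: "(\<lambda>k. norm (?vt (g k))) \<longlonglongrightarrow> \<tau>" "(\<lambda>k. norm (?vt (Suc (g k)))) \<longlonglongrightarrow> \<tau>"
    if "strict_mono g" for g
    using LIMSEQ_subseq_LIMSEQ[OF t that] LIMSEQ_subseq_LIMSEQ[OF LIMSEQ_Suc[OF t] that]
    by (simp_all add: o_def)
  obtain g1 where g1: "strict_mono g1"
    and vt_h1: "(\<lambda>k. ?vt (h (g1 k))) \<longlonglongrightarrow> poly_mat_vec (P_s s A u) A u"
    using iter_vt_subseq_tendsto[OF lim] by blast
  have h1: "strict_mono (h \<circ> g1)" using h g1 by (rule strict_mono_o)
  have "(\<lambda>k. (1 / norm (?vt (h (g1 k)))) *\<^sub>R ?vt (h (g1 k))) \<longlonglongrightarrow> w"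
    unfolding w_def using t_subseq(1)[OF h1] \<tau> by (intro tendsto_intros vt_h1) (simp_all add: o_def)
  then have "(\<lambda>k. ?v (Suc (h (g1 k)))) \<longlonglongrightarrow> w"
    by (simp add: iter_v_Suc_eq)
  then obtain g2 where g2: "strict_mono g2"
    and vt_h2: "(\<lambda>k. ?vt (Suc (h (g1 (g2 k))))) \<longlonglongrightarrow> poly_mat_vec (P_s s A w) A w"
    using iter_vt_subseq_tendsto[where f = "\<lambda>k. Suc (h (g1 k))"] by blast
  define h2 where "h2 = h \<circ> g1 \<circ> g2"
  have h2: "strict_mono h2" unfolding h2_def using h1 g2 by (rule strict_mono_o)
  have lhs: "(\<lambda>k. norm (?vt (h2 k)) *\<^sub>R ?vt (Suc (h2 k)))
      \<longlonglongrightarrow> \<tau> *\<^sub>R poly_mat_vec (P_s s A w) A w"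
    using t_subseq(1)[OF h2] vt_h2 unfolding h2_def by (intro tendsto_intros) (simp_all add: o_def)
  have eq: "poly_mat_vec (P_s s A w * P_s s A u) A u = \<tau> *\<^sub>R poly_mat_vec (P_s s A w) A w"
    using \<tau> by (simp add: w_def poly_mat_vec_mult poly_mat_vec_scaleR)
  have rhs: "(\<lambda>k. norm (?vt (h2 k)) *\<^sub>R ?vt (Suc (h2 k))) \<longlonglongrightarrow> \<tau>\<^sup>2 *\<^sub>R u"
  proof -
    have v_h2: "(\<lambda>k. ?v (h2 k)) \<longlonglongrightarrow> u"
      using LIMSEQ_subseq_LIMSEQ[OF lim strict_mono_o[OF g1 g2]] unfolding h2_def
      by (simp add: o_def)
    have "(\<lambda>k. (?v (Suc (Suc (h2 k))) - ?v (h2 k)) + ?v (h2 k)) \<longlonglongrightarrow> 0 + u"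
      using LIMSEQ_subseq_LIMSEQ[OF iter_v_Suc_Suc_diff_tendsto h2] v_h2
      by (intro tendsto_add) (simp_all add: o_def)
    then have "(\<lambda>k. (norm (?vt (h2 k)) * norm (?vt (Suc (h2 k)))) *\<^sub>R ?v (Suc (Suc (h2 k))))
        \<longlonglongrightarrow> \<tau>\<^sup>2 *\<^sub>R u"
      unfolding power2_eq_square by (intro tendsto_intros t_subseq[OF h2]) simp
    moreover have "norm (?vt (h2 k)) *\<^sub>R ?vt (Suc (h2 k)) =
        (norm (?vt (h2 k)) * norm (?vt (Suc (h2 k)))) *\<^sub>R ?v (Suc (Suc (h2 k)))" for k
      using iter_vt_eq[of "Suc (h2 k)"] by (metis scaleR_scaleR)
    ultimately show ?thesis by simp
  qed
  show ?thesis
    unfolding eq using LIMSEQ_unique[OF lhs rhs] .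
qed

lemma grade_iter_v_limit:
  assumes h: "strict_mono h" and lim: "(\<lambda>k. iter_v A s v0 (h k)) \<longlonglongrightarrow> u"
    and \<tau>_def: "\<tau> = lim (\<lambda>k. norm (iter_vt A s v0 k))"
    and w_def: "w = (1 / \<tau>) *\<^sub>R poly_mat_vec (P_s s A u) A u"
  shows "s < grade A u \<and> grade A u \<le> 2 * s"
proof -
  have u: "no_monic_annihilator A s u"
    using no_monic_annihilator_limit_iter_v[OF lim] .
  then have "no_monic_annihilator A s w"
    using no_monic_annihilator_P_s_image[OF symm u s_ge, of "1 / \<tau>"] lim_norm_iter_vt_pos
    unfolding w_def \<tau>_def by simp
  then have "is_P_s s A w (P_s s A w)" "is_P_s s A u (P_s s A u)"
    using u s_ge by (simp_all add: is_P_s_P_s)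
  then have "monic (P_s s A w * P_s s A u)" "degree (P_s s A w * P_s s A u) = 2 * s"
    unfolding is_P_s_def by (auto simp: monic_mult degree_mult_eq monic_nonzero)
  with grade_bounds_if_poly_eigenvector[OF u s_ge _ _ iter_v_limit_eigenvector[OF h lim \<tau>_def w_def]]
  show ?thesis by blast
qed

end

theorem theorem4p2:
  fixes A :: "real^'n^'n" and s :: nat and v0 :: "real^'n" and \<tau> :: real
  assumes symm: "transpose A = A"
    and s_ge: "1 \<le> s" and s_lt: "s < min_poly_deg A"
    and v0_norm: "norm v0 = 1"
    and v0_grade: "grade A v0 \<ge> s + 1"
    and tau_def: "\<tau> = lim (\<lambda>k. norm (iter_vt A s v0 k))"
  shows "(\<lambda>k. norm (iter_vt A s v0 k)) \<longlonglongrightarrow> \<tau> \<and> \<tau> > 0 \<and>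
    (\<forall>vs r. strict_mono r \<longrightarrow> (\<lambda>k. iter_v A s v0 (2 * r k)) \<longlonglongrightarrow> vs \<longrightarrow>
       (let ws = (1 / \<tau>) *\<^sub>R poly_mat_vec (P_s s A vs) A vs;
            Q = P_s s A ws * P_s s A vs
        in poly_mat_vec Q A vs - \<tau>\<^sup>2 *\<^sub>R vs = 0
           \<and> s < grade A vs \<and> grade A vs \<le> 2 * s))"
proof -
  have "no_monic_annihilator A s v0"
    using v0_grade by (intro no_monic_annihilator_if_grade_gt) simp
  note iter = symm s_ge v0_norm this
  have "poly_mat_vec (P_s s A ws * P_s s A vs) A vs = \<tau>\<^sup>2 *\<^sub>R vs
      \<and> s < grade A vs \<and> grade A vs \<le> 2 * s"
    if "strict_mono r" "(\<lambda>k. iter_v A s v0 (2 * r k)) \<longlonglongrightarrow> vs"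
      and "ws = (1 / \<tau>) *\<^sub>R poly_mat_vec (P_s s A vs) A vs" for r vs ws
  proof -
    have "strict_mono (\<lambda>k. 2 * r k)" using that(1) by (simp add: strict_mono_def)
    from iter_v_limit_eigenvector[OF iter this that(2) tau_def that(3)]
      grade_iter_v_limit[OF iter this that(2) tau_def that(3)]
    show ?thesis by simp
  qed
  then show ?thesis
    unfolding Let_def tau_def using norm_iter_vt_tendsto[OF iter] lim_norm_iter_vt_pos[OF iter] by simp
qed

end
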